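(* Let $a<b$, $n\ge1$, and let $I_n: a=x_0<x_1<\cdots<x_n=b$ be the uniform partition with $x_{i+1}-x_i=h=\frac{b-a}{n}$ for $i=0,\dots,n-1$. Let $f:[a,b]\rightarrow\mathbb{R}$ be an absolutely continuous mapping with $f'\in L^2[a,b]$, and let $\sigma(f')=\|f'\|_2^2-\frac{(f(b)-f(a))^2}{b-a}$. Define \[ S(f,I_n)=\frac{h}{2}\sum_{i=0}^{n-1}\left[f\left(\frac{3x_i+x_{i+1}}{4}\right)+f\left(\frac{x_i+3x_{i+1}}{4}\right)\right] \] and $R(f,I_n)=\int_a^b f(x)\,dx-S(f,I_n)$. Then \[ |R(f,I_n)|\leq \frac{(b-a)^{3/2}}{4\sqrt{3}\,n} \sqrt{\sigma(f')}. \]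
   Context: $\|g\|_2=\left(\int_a^b g(t)^2\,dt\right)^{1/2}$. *)

theory Defs
  imports "HOL-Analysis.Analysis"
begin

definition abs_cont_on :: "(real \<Rightarrow> real) \<Rightarrow> real \<Rightarrow> real \<Rightarrow> bool" where
  "abs_cont_on f a b \<longleftrightarrow>
     (\<forall>e>0. \<exists>d>0. \<forall>(m::nat) (u::nat \<Rightarrow> real) (v::nat \<Rightarrow> real).
        (\<forall>k<m. a \<le> u k \<and> u k \<le> v k \<and> v k \<le> b) \<and>
        (\<forall>k<m. \<forall>j<m. k \<noteq> j \<longrightarrow> v k \<le> u j \<or> v j \<le> u k) \<and>
        (\<Sum>k<m. v k - u k) < d
        \<longrightarrow> (\<Sum>k<m. \<bar>f (v k) - f (u k)\<bar>) < e)"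

definition quad_S :: "(real \<Rightarrow> real) \<Rightarrow> real \<Rightarrow> real \<Rightarrow> nat \<Rightarrow> real" where
  "quad_S f a b n =
     (let h = (b - a) / real n; x = (\<lambda>i::nat. a + real i * h) in
      h / 2 * (\<Sum>i<n. f ((3 * x i + x (Suc i)) / 4) + f ((x i + 3 * x (Suc i)) / 4)))"

end

theory Submission
  imports Defs
begin

(*
  On a cell [p,q] with quarter points q1, q3 and midpoint m, the error of the quarter-point rule is,
  up to sign, the integral of K(t) * (f'(t) - c), where the kernel K(t) is t - p, t - m, t - q on
  [p,q1], [q1,q3], [q3,q]: integrate by parts on each quarter, which for an absolutely continuous f
  needs the fundamental theorem of calculus proved below.  Since K has integral zero over the cell,
  any constant c may be subtracted from f'.
  The estimate |int K g| <= (alpha * int K^2 + int g^2 / alpha) / 2, used on every quarter with one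
  common alpha and summed over all cells (where int K^2 adds up to (b-a)^3 / (48 n^2)), is minimised
  in alpha; with c = (f b - f a) / (b - a) the integral of (f' - c)^2 is exactly sigma(f').
*)

(* Otherwise the content of a polynomial would capture the name of the content of an interval. *)
hide_const (open) Polynomial.content

section \<open>Absolute continuity\<close>

definition nonoverlapping_intervals :: "real \<Rightarrow> real \<Rightarrow> nat \<Rightarrow> (nat \<Rightarrow> real) \<Rightarrow> (nat \<Rightarrow> real) \<Rightarrow> bool" where
  "nonoverlapping_intervals a b m u v \<longleftrightarrow>
     (\<forall>k<m. a \<le> u k \<and> u k \<le> v k \<and> v k \<le> b) \<and> (\<forall>k<m. \<forall>j<m. k \<noteq> j \<longrightarrow> v k \<le> u j \<or> v j \<le> u k)"

lemma abs_cont_on_iff: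
  "abs_cont_on f a b \<longleftrightarrow> (\<forall>e>0. \<exists>d>0. \<forall>m u v. nonoverlapping_intervals a b m u v \<longrightarrow>
     (\<Sum>k<m. v k - u k) < d \<longrightarrow> (\<Sum>k<m. \<bar>f (v k) - f (u k)\<bar>) < e)"
  by (simp only: abs_cont_on_def nonoverlapping_intervals_def imp_conjL)

lemma abs_cont_onE:
  assumes "abs_cont_on f a b" and "e > 0"
  obtains d where "d > 0" "\<And>m u v. nonoverlapping_intervals a b m u v \<Longrightarrow>
    (\<Sum>k<m. v k - u k) < d \<Longrightarrow> (\<Sum>k<m. \<bar>f (v k) - f (u k)\<bar>) < e"
proof -
  obtain d where "d > 0" and d: "\<forall>m u v. nonoverlapping_intervals a b m u v \<longrightarrow>
      (\<Sum>k<m. v k - u k) < d \<longrightarrow> (\<Sum>k<m. \<bar>f (v k) - f (u k)\<bar>) < e"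
    using assms(1)[unfolded abs_cont_on_iff, rule_format, OF assms(2)] by blast
  show thesis
    by (rule that[OF \<open>d > 0\<close>]) (use d in blast)
qed

lemma abs_cont_onI:
  assumes "\<And>e. e > 0 \<Longrightarrow> \<exists>d>0. \<forall>m u v. nonoverlapping_intervals a b m u v \<longrightarrow>
     (\<Sum>k<m. v k - u k) < d \<longrightarrow> (\<Sum>k<m. \<bar>f (v k) - f (u k)\<bar>) < e"
  shows "abs_cont_on f a b"
  unfolding abs_cont_on_iff by (intro allI impI) (rule assms)

lemma nonoverlapping_intervals_mono:
  assumes "nonoverlapping_intervals p q m u v" and "a \<le> p" and "q \<le> b"
  shows "nonoverlapping_intervals a b m u v"
  using assms unfolding nonoverlapping_intervals_def by (meson order_trans)

lemma abs_cont_on_subinterval: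
  assumes "abs_cont_on f a b" and "a \<le> p" and "q \<le> b"
  shows "abs_cont_on f p q"
proof (rule abs_cont_onI)
  fix e :: real assume "e > 0"
  then obtain d where "d > 0" and d: "\<And>m u v. nonoverlapping_intervals a b m u v \<Longrightarrow>
      (\<Sum>k<m. v k - u k) < d \<Longrightarrow> (\<Sum>k<m. \<bar>f (v k) - f (u k)\<bar>) < e"
    using abs_cont_onE[OF assms(1)] by blast
  show "\<exists>d>0. \<forall>m u v. nonoverlapping_intervals p q m u v \<longrightarrow>
      (\<Sum>k<m. v k - u k) < d \<longrightarrow> (\<Sum>k<m. \<bar>f (v k) - f (u k)\<bar>) < e"
  proof (intro exI[of _ d] conjI allI impI)
    fix m u v assume "nonoverlapping_intervals p q m u v" and "(\<Sum>k<m. v k - u k) < d"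
    then show "(\<Sum>k<m. \<bar>f (v k) - f (u k)\<bar>) < e"
      using d nonoverlapping_intervals_mono assms(2,3) by blast
  qed fact
qed

lemma abs_cont_on_imp_continuous_on:
  assumes "abs_cont_on f a b"
  shows "continuous_on {a..b} f"
  unfolding continuous_on_iff
proof (intro ballI allI impI)
  fix x e :: real assume x: "x \<in> {a..b}" and "e > 0"
  then obtain d where "d > 0" and d: "\<And>m u v. nonoverlapping_intervals a b m u v \<Longrightarrow>
      (\<Sum>k<m. v k - u k) < d \<Longrightarrow> (\<Sum>k<m. \<bar>f (v k) - f (u k)\<bar>) < e"
    using abs_cont_onE[OF assms] by blast
  have "dist (f y) (f x) < e" if y: "y \<in> {a..b}" "dist y x < d" for y
  proof -
    have "nonoverlapping_intervals a b 1 (\<lambda>_. min x y) (\<lambda>_. max x y)"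
      using x y(1) unfolding nonoverlapping_intervals_def by auto
    then show ?thesis
      using d[of 1 "\<lambda>_. min x y" "\<lambda>_. max x y"] y(2)
      by (cases "x \<le> y") (auto simp: dist_real_def abs_minus_commute)
  qed
  with \<open>d > 0\<close> show "\<exists>d>0. \<forall>y\<in>{a..b}. dist y x < d \<longrightarrow> dist (f y) (f x) < e"
    by blast
qed

lemma abs_cont_on_bounded:
  assumes "abs_cont_on f a b"
  obtains B where "B > 0" "\<And>t. t \<in> {a..b} \<Longrightarrow> \<bar>f t\<bar> \<le> B"
proof -
  have "bounded (f ` {a..b})"
    using compact_continuous_image[OF abs_cont_on_imp_continuous_on[OF assms]] compact_imp_bounded
    by blast
  then show thesis
    using that unfolding bounded_pos by auto
qed

lemma abs_cont_on_diff_const: "abs_cont_on (\<lambda>t. t - c) a b"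
proof (rule abs_cont_onI)
  fix e :: real assume "e > 0"
  show "\<exists>d>0. \<forall>m u v. nonoverlapping_intervals a b m u v \<longrightarrow>
      (\<Sum>k<m. v k - u k) < d \<longrightarrow> (\<Sum>k<m. \<bar>(v k - c) - (u k - c)\<bar>) < e"
  proof (intro exI[of _ e] conjI allI impI)
    fix m u v assume "nonoverlapping_intervals a b m u v" and "(\<Sum>k<m. v k - u k) < e"
    then show "(\<Sum>k<m. \<bar>(v k - c) - (u k - c)\<bar>) < e"
      unfolding nonoverlapping_intervals_def by simp
  qed fact
qed

lemma abs_cont_on_mult:
  assumes f: "abs_cont_on f a b" and g: "abs_cont_on g a b"
  shows "abs_cont_on (\<lambda>t. f t * g t) a b"
proof (rule abs_cont_onI)
  fix e :: real assume "e > 0"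
  obtain Bf where "Bf > 0" and Bf: "\<And>t. t \<in> {a..b} \<Longrightarrow> \<bar>f t\<bar> \<le> Bf"
    using abs_cont_on_bounded[OF f] by blast
  obtain Bg where "Bg > 0" and Bg: "\<And>t. t \<in> {a..b} \<Longrightarrow> \<bar>g t\<bar> \<le> Bg"
    using abs_cont_on_bounded[OF g] by blast
  have "e / (2 * Bg) > 0" "e / (2 * Bf) > 0"
    using \<open>e > 0\<close> \<open>Bf > 0\<close> \<open>Bg > 0\<close> by simp_all
  obtain df where "df > 0" and df: "\<And>m u v. nonoverlapping_intervals a b m u v \<Longrightarrow>
      (\<Sum>k<m. v k - u k) < df \<Longrightarrow> (\<Sum>k<m. \<bar>f (v k) - f (u k)\<bar>) < e / (2 * Bg)"
    using abs_cont_onE[OF f \<open>e / (2 * Bg) > 0\<close>] by blast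
  obtain dg where "dg > 0" and dg: "\<And>m u v. nonoverlapping_intervals a b m u v \<Longrightarrow>
      (\<Sum>k<m. v k - u k) < dg \<Longrightarrow> (\<Sum>k<m. \<bar>g (v k) - g (u k)\<bar>) < e / (2 * Bf)"
    using abs_cont_onE[OF g \<open>e / (2 * Bf) > 0\<close>] by blast
  show "\<exists>d>0. \<forall>m u v. nonoverlapping_intervals a b m u v \<longrightarrow>
      (\<Sum>k<m. v k - u k) < d \<longrightarrow> (\<Sum>k<m. \<bar>f (v k) * g (v k) - f (u k) * g (u k)\<bar>) < e"
  proof (intro exI[of _ "min df dg"] conjI allI impI)
    fix m u v
    assume uv: "nonoverlapping_intervals a b m u v" and small: "(\<Sum>k<m. v k - u k) < min df dg"
    have "\<bar>f (v k) * g (v k) - f (u k) * g (u k)\<bar>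
        \<le> Bg * \<bar>f (v k) - f (u k)\<bar> + Bf * \<bar>g (v k) - g (u k)\<bar>" if "k < m" for k
    proof -
      have "f (v k) * g (v k) - f (u k) * g (u k)
          = g (v k) * (f (v k) - f (u k)) + f (u k) * (g (v k) - g (u k))"
        by (simp add: algebra_simps)
      then have "\<bar>f (v k) * g (v k) - f (u k) * g (u k)\<bar>
          \<le> \<bar>g (v k)\<bar> * \<bar>f (v k) - f (u k)\<bar> + \<bar>f (u k)\<bar> * \<bar>g (v k) - g (u k)\<bar>"
        by (simp add: abs_triangle_ineq[THEN order_trans] flip: abs_mult)
      also have "\<dots> \<le> Bg * \<bar>f (v k) - f (u k)\<bar> + Bf * \<bar>g (v k) - g (u k)\<bar>"
        using uv that Bf Bg unfolding nonoverlapping_intervals_def by (intro add_mono mult_right_mono) auto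
      finally show ?thesis .
    qed
    then have "(\<Sum>k<m. \<bar>f (v k) * g (v k) - f (u k) * g (u k)\<bar>)
        \<le> Bg * (\<Sum>k<m. \<bar>f (v k) - f (u k)\<bar>) + Bf * (\<Sum>k<m. \<bar>g (v k) - g (u k)\<bar>)"
      by (simp add: sum_distrib_left flip: sum.distrib) (rule sum_mono, simp)
    also have "\<dots> < Bg * (e / (2 * Bg)) + Bf * (e / (2 * Bf))"
      using df[OF uv] dg[OF uv] small \<open>Bf > 0\<close> \<open>Bg > 0\<close> by (intro add_strict_mono mult_strict_left_mono) auto
    also have "\<dots> = e"
      using \<open>Bf > 0\<close> \<open>Bg > 0\<close> by simp
    finally show "(\<Sum>k<m. \<bar>f (v k) * g (v k) - f (u k) * g (u k)\<bar>) < e" .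
  qed (use \<open>df > 0\<close> \<open>dg > 0\<close> in simp)
qed

section \<open>Tagged divisions of a real interval\<close>

lemma tagged_division_of_real_memberE:
  fixes a b :: real
  assumes "p tagged_division_of {a..b}" and "(x, K) \<in> p"
  obtains u v where "K = {u..v}" "a \<le> u" "u \<le> x" "x \<le> v" "v \<le> b"
proof -
  obtain u v where "K = {u..v}"
    using tagged_division_ofD(4)[OF assms] by (auto simp: cbox_interval)
  moreover have "x \<in> K" "K \<subseteq> {a..b}"
    using tagged_division_ofD(2,3)[OF assms] by auto
  ultimately show thesis
    using that[of u v] by auto
qed

lemma interval_order_of_disjoint_interiors:
  fixes u1 v1 u2 v2 :: real
  assumes "u1 < v1" and "u2 < v2" and "interior {u1..v1} \<inter> interior {u2..v2} = {}"
  shows "v1 \<le> u2 \<or> v2 \<le> u1"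
proof (rule ccontr)
  assume "\<not> ?thesis"
  then have "(max u1 u2 + min v1 v2) / 2 \<in> interior {u1..v1} \<inter> interior {u2..v2}"
    using assms(1,2) by auto
  with assms(3) show False
    by blast
qed

lemma tagged_division_subset_nonoverlapping_intervals:
  fixes a b :: real
  assumes p: "p tagged_division_of {a..b}" and "Q \<subseteq> p"
    and nondegenerate: "\<And>x K. (x, K) \<in> Q \<Longrightarrow> Inf K < Sup K"
  obtains m u v where "nonoverlapping_intervals a b m u v"
    "\<And>\<phi> :: real set \<Rightarrow> real. (\<Sum>(x, K)\<in>Q. \<phi> K) = (\<Sum>k<m. \<phi> {u k..v k})"
proof -
  have interval: "{Inf K..Sup K} = K \<and> a \<le> Inf K \<and> Inf K < Sup K \<and> Sup K \<le> b" if xK: "(x, K) \<in> Q" for x K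
  proof -
    obtain u v where "K = {u..v}" "a \<le> u" "u \<le> x" "x \<le> v" "v \<le> b"
      using tagged_division_of_real_memberE[OF p] xK \<open>Q \<subseteq> p\<close> by blast
    then show ?thesis
      using nondegenerate[OF xK] by auto
  qed
  have "finite Q"
    using finite_subset[OF \<open>Q \<subseteq> p\<close> tagged_division_of_finite[OF p]] .
  then obtain g where g: "bij_betw g {..<card Q} Q"
    using ex_bij_betw_nat_finite unfolding atLeast0LessThan by blast
  define u where "u k = Inf (snd (g k))" for k
  define v where "v k = Sup (snd (g k))" for k
  have g_interval: "{u k..v k} = snd (g k) \<and> a \<le> u k \<and> u k < v k \<and> v k \<le> b" if "k < card Q" for k
    using bij_betw_apply[OF g] interval[of "fst (g k)" "snd (g k)"] that unfolding u_def v_def by auto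
  have disjoint: "v k \<le> u j \<or> v j \<le> u k" if "k < card Q" "j < card Q" "k \<noteq> j" for k j
  proof -
    have "g k \<in> p" "g j \<in> p" "g k \<noteq> g j"
      using that bij_betw_apply[OF g] bij_betw_imp_inj_on[OF g] \<open>Q \<subseteq> p\<close> by (auto dest: inj_onD)
    then have "interior (snd (g k)) \<inter> interior (snd (g j)) = {}"
      using tagged_division_ofD(5)[OF p] by (metis prod.collapse)
    then show ?thesis
      using interval_order_of_disjoint_interiors[of "u k" "v k" "u j" "v j"]
        g_interval[OF that(1)] g_interval[OF that(2)] by simp
  qed
  show thesis
  proof (rule that)
    show "nonoverlapping_intervals a b (card Q) u v"
      unfolding nonoverlapping_intervals_def using g_interval disjoint by (simp add: less_imp_le)
    fix \<phi> :: "real set \<Rightarrow> real"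
    have "(\<Sum>(x, K)\<in>Q. \<phi> K) = (\<Sum>k<card Q. \<phi> (snd (g k)))"
      using sum.reindex_bij_betw[OF g, of "\<lambda>(x, K). \<phi> K"] by (simp add: case_prod_beta)
    also have "\<dots> = (\<Sum>k<card Q. \<phi> {u k..v k})"
      using g_interval by (intro sum.cong) auto
    finally show "(\<Sum>(x, K)\<in>Q. \<phi> K) = (\<Sum>k<card Q. \<phi> {u k..v k})" .
  qed
qed

lemma tagged_division_sum_nondegenerate:
  fixes a b :: real
  assumes p: "p tagged_division_of {a..b}" and "Q \<subseteq> p" and "\<And>c. \<phi> {c..c} = 0"
  shows "(\<Sum>(x, K)\<in>Q. \<phi> K) = (\<Sum>(x, K)\<in>{t\<in>Q. Inf (snd t) < Sup (snd t)}. \<phi> K)"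
proof (rule sum.mono_neutral_right)
  show "finite Q"
    using finite_subset[OF \<open>Q \<subseteq> p\<close> tagged_division_of_finite[OF p]] .
  show "\<forall>t\<in>Q - {t\<in>Q. Inf (snd t) < Sup (snd t)}. (\<lambda>(x, K). \<phi> K) t = 0"
  proof
    fix t assume t: "t \<in> Q - {t\<in>Q. Inf (snd t) < Sup (snd t)}"
    then have "(fst t, snd t) \<in> p"
      using \<open>Q \<subseteq> p\<close> by auto
    then obtain u v where "snd t = {u..v}" "a \<le> u" "u \<le> fst t" "fst t \<le> v" "v \<le> b"
      by (rule tagged_division_of_real_memberE[OF p])
    with t have "snd t = {u..u}"
      by auto
    then show "(\<lambda>(x, K). \<phi> K) t = 0"
      using assms(3) by (simp add: case_prod_beta)
  qed
qed auto

lemma abs_cont_on_tagged_division: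
  assumes ac: "abs_cont_on F a b" and "e > 0"
  obtains d where "d > 0" "\<And>p Q. p tagged_division_of {a..b} \<Longrightarrow> Q \<subseteq> p \<Longrightarrow>
    (\<Sum>(x, K)\<in>Q. content K) < d \<Longrightarrow> (\<Sum>(x, K)\<in>Q. \<bar>F (Sup K) - F (Inf K)\<bar>) < e"
proof -
  obtain d where "d > 0" and d: "\<And>m u v. nonoverlapping_intervals a b m u v \<Longrightarrow>
      (\<Sum>k<m. v k - u k) < d \<Longrightarrow> (\<Sum>k<m. \<bar>F (v k) - F (u k)\<bar>) < e"
    using abs_cont_onE[OF ac \<open>e > 0\<close>] by blast
  have "(\<Sum>(x, K)\<in>Q. \<bar>F (Sup K) - F (Inf K)\<bar>) < e"
    if p: "p tagged_division_of {a..b}" and "Q \<subseteq> p" and small: "(\<Sum>(x, K)\<in>Q. content K) < d" for p Q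
  proof -
    define Q' where "Q' = {t\<in>Q. Inf (snd t) < Sup (snd t)}"
    have "Q' \<subseteq> p"
      using \<open>Q \<subseteq> p\<close> unfolding Q'_def by blast
    obtain m u v where uv: "nonoverlapping_intervals a b m u v"
      and sums: "\<And>\<phi> :: real set \<Rightarrow> real. (\<Sum>(x, K)\<in>Q'. \<phi> K) = (\<Sum>k<m. \<phi> {u k..v k})"
      by (rule tagged_division_subset_nonoverlapping_intervals[OF p \<open>Q' \<subseteq> p\<close>]) (auto simp: Q'_def)
    have "(\<Sum>k<m. v k - u k) = (\<Sum>k<m. content {u k..v k})"
      using uv unfolding nonoverlapping_intervals_def by (intro sum.cong) auto
    also have "\<dots> = (\<Sum>(x, K)\<in>Q'. content K)"
      by (rule sums[symmetric])
    also have "\<dots> = (\<Sum>(x, K)\<in>Q. content K)"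
      using tagged_division_sum_nondegenerate[OF p \<open>Q \<subseteq> p\<close>, of content] unfolding Q'_def by simp
    finally have "(\<Sum>k<m. \<bar>F (v k) - F (u k)\<bar>) < e"
      using d[OF uv] small by simp
    also have "(\<Sum>k<m. \<bar>F (v k) - F (u k)\<bar>) = (\<Sum>k<m. \<bar>F (Sup {u k..v k}) - F (Inf {u k..v k})\<bar>)"
      using uv unfolding nonoverlapping_intervals_def by (intro sum.cong) auto
    also have "\<dots> = (\<Sum>(x, K)\<in>Q'. \<bar>F (Sup K) - F (Inf K)\<bar>)"
      by (rule sums[symmetric])
    also have "\<dots> = (\<Sum>(x, K)\<in>Q. \<bar>F (Sup K) - F (Inf K)\<bar>)"
      using tagged_division_sum_nondegenerate[OF p \<open>Q \<subseteq> p\<close>, of "\<lambda>K. \<bar>F (Sup K) - F (Inf K)\<bar>"]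
      unfolding Q'_def by simp
    finally show ?thesis .
  qed
  with \<open>d > 0\<close> show thesis
    using that by blast
qed

section \<open>The fundamental theorem of calculus for absolutely continuous functions\<close>

lemma has_real_derivative_straddle:
  assumes "(F has_real_derivative D) (at x)" and "\<epsilon> > 0"
  obtains r where "r > 0" "\<And>u v. u \<le> x \<Longrightarrow> x \<le> v \<Longrightarrow> {u..v} \<subseteq> ball x r \<Longrightarrow>
    \<bar>(v - u) * D - (F v - F u)\<bar> \<le> \<epsilon> * (v - u)"
proof -
  have "(F has_derivative (\<lambda>h. D * h)) (at x)"
    using assms(1) unfolding has_field_derivative_def .
  then obtain r where "r > 0" and r: "\<And>y. \<bar>y - x\<bar> < r \<Longrightarrow> \<bar>F y - F x - D * (y - x)\<bar> \<le> \<epsilon> * \<bar>y - x\<bar>"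
    unfolding has_derivative_at_alt using \<open>\<epsilon> > 0\<close> by (metis real_norm_def)
  have "\<bar>(v - u) * D - (F v - F u)\<bar> \<le> \<epsilon> * (v - u)"
    if "u \<le> x" "x \<le> v" "{u..v} \<subseteq> ball x r" for u v
  proof -
    have "u \<in> ball x r" "v \<in> ball x r"
      using subsetD[OF that(3)] that(1,2) by auto
    then have "\<bar>u - x\<bar> < r" "\<bar>v - x\<bar> < r"
      by (auto simp: dist_real_def abs_minus_commute)
    then have "\<bar>F u - F x - D * (u - x)\<bar> \<le> \<epsilon> * \<bar>u - x\<bar>" "\<bar>F v - F x - D * (v - x)\<bar> \<le> \<epsilon> * \<bar>v - x\<bar>"
      using r by blast+
    moreover have "\<bar>u - x\<bar> = x - u" "\<bar>v - x\<bar> = v - x"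
      using that(1,2) by auto
    moreover have "(v - u) * D - (F v - F u) = (F u - F x - D * (u - x)) - (F v - F x - D * (v - x))"
      by (simp add: algebra_simps)
    ultimately show ?thesis
      by (simp add: abs_diff_le_iff algebra_simps abs_le_iff)
  qed
  with \<open>r > 0\<close> show thesis
    using that by blast
qed

lemma has_real_derivative_tagged_division_gauge:
  assumes "\<And>x. x \<in> S \<Longrightarrow> (F has_real_derivative F' x) (at x)" and "\<epsilon> > 0"
  obtains \<gamma> where "gauge \<gamma>" "\<And>p x K. p tagged_division_of {a..b} \<Longrightarrow> \<gamma> fine p \<Longrightarrow> (x, K) \<in> p \<Longrightarrow> x \<in> S \<Longrightarrow>
    \<bar>content K * F' x - (F (Sup K) - F (Inf K))\<bar> \<le> \<epsilon> * content K"
proof -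
  have "\<forall>x\<in>S. \<exists>r>0. \<forall>u v. u \<le> x \<longrightarrow> x \<le> v \<longrightarrow> {u..v} \<subseteq> ball x r \<longrightarrow>
      \<bar>(v - u) * F' x - (F v - F u)\<bar> \<le> \<epsilon> * (v - u)"
  proof
    fix x assume "x \<in> S"
    then obtain r where "r > 0" "\<And>u v. u \<le> x \<Longrightarrow> x \<le> v \<Longrightarrow> {u..v} \<subseteq> ball x r \<Longrightarrow>
        \<bar>(v - u) * F' x - (F v - F u)\<bar> \<le> \<epsilon> * (v - u)"
      using has_real_derivative_straddle[OF assms(1) \<open>\<epsilon> > 0\<close>] by blast
    then show "\<exists>r>0. \<forall>u v. u \<le> x \<longrightarrow> x \<le> v \<longrightarrow> {u..v} \<subseteq> ball x r \<longrightarrow>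
        \<bar>(v - u) * F' x - (F v - F u)\<bar> \<le> \<epsilon> * (v - u)"
      by blast
  qed
  then obtain r where r: "\<forall>x\<in>S. r x > 0 \<and> (\<forall>u v. u \<le> x \<longrightarrow> x \<le> v \<longrightarrow> {u..v} \<subseteq> ball x (r x) \<longrightarrow>
      \<bar>(v - u) * F' x - (F v - F u)\<bar> \<le> \<epsilon> * (v - u))"
    by (metis bchoice)
  define \<gamma> where "\<gamma> x = ball x (if x \<in> S then r x else 1)" for x
  have "gauge \<gamma>"
    unfolding \<gamma>_def using r by (intro gauge_ball_dependent) auto
  moreover have "\<bar>content K * F' x - (F (Sup K) - F (Inf K))\<bar> \<le> \<epsilon> * content K"
    if p: "p tagged_division_of {a..b}" and "\<gamma> fine p" and xK: "(x, K) \<in> p" and "x \<in> S" for p x K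
  proof -
    obtain u v where "K = {u..v}" "u \<le> x" "x \<le> v"
      using tagged_division_of_real_memberE[OF p xK] by blast
    moreover have "K \<subseteq> ball x (r x)"
      using fineD[OF \<open>\<gamma> fine p\<close> xK] \<open>x \<in> S\<close> unfolding \<gamma>_def by simp
    ultimately show ?thesis
      using r \<open>x \<in> S\<close> by auto
  qed
  ultimately show thesis
    using that by blast
qed

lemma abs_cont_on_negligible_tags_gauge:
  assumes "abs_cont_on F a b" and "negligible N" and "e > 0"
  obtains \<gamma> where "gauge \<gamma>" "\<And>p. p tagged_division_of {a..b} \<Longrightarrow> \<gamma> fine p \<Longrightarrow>
    (\<Sum>(x, K)\<in>{t\<in>p. fst t \<in> N}. \<bar>F (Sup K) - F (Inf K)\<bar>) < e"
proof -
  obtain d where "d > 0" and d: "\<And>p Q. p tagged_division_of {a..b} \<Longrightarrow> Q \<subseteq> p \<Longrightarrow>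
      (\<Sum>(x, K)\<in>Q. content K) < d \<Longrightarrow> (\<Sum>(x, K)\<in>Q. \<bar>F (Sup K) - F (Inf K)\<bar>) < e"
    using abs_cont_on_tagged_division[OF assms(1,3)] by blast
  have "(indicator N has_integral (0::real)) (cbox a b)"
    using assms(2) unfolding negligible_def by blast
  from this[unfolded has_integral, rule_format, OF \<open>d > 0\<close>]
  obtain \<gamma> where "gauge \<gamma>" and \<gamma>: "\<And>p. p tagged_division_of {a..b} \<Longrightarrow> \<gamma> fine p \<Longrightarrow>
      \<bar>\<Sum>(x, K)\<in>p. content K * indicator N x\<bar> < d"
    by (auto simp: cbox_interval)
  have "(\<Sum>(x, K)\<in>{t\<in>p. fst t \<in> N}. \<bar>F (Sup K) - F (Inf K)\<bar>) < e"
    if p: "p tagged_division_of {a..b}" and "\<gamma> fine p" for p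
  proof (rule d[OF p])
    have "(\<Sum>(x, K)\<in>{t\<in>p. fst t \<in> N}. content K) = (\<Sum>(x, K)\<in>p. content K * indicator N x)"
      using tagged_division_of_finite[OF p]
      by (simp add: sum.inter_filter[symmetric] case_prod_beta indicator_def Int_def)
    also have "\<dots> < d"
      using \<gamma>[OF p \<open>\<gamma> fine p\<close>] by simp
    finally show "(\<Sum>(x, K)\<in>{t\<in>p. fst t \<in> N}. content K) < d" .
  qed blast
  with \<open>gauge \<gamma>\<close> show thesis
    using that by blast
qed

lemma tagged_division_Riemann_sum_increment_bound:
  fixes F G :: "real \<Rightarrow> real"
  assumes "a \<le> b" and p: "p tagged_division_of {a..b}"
    and "(\<Sum>(x, K)\<in>{t\<in>p. fst t \<in> N}. \<bar>content K * G x - (F (Sup K) - F (Inf K))\<bar>) < \<eta>"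
    and "\<And>x K. (x, K) \<in> p \<Longrightarrow> x \<notin> N \<Longrightarrow> \<bar>content K * G x - (F (Sup K) - F (Inf K))\<bar> \<le> \<epsilon> * content K"
    and "\<epsilon> \<ge> 0"
  shows "\<bar>(\<Sum>(x, K)\<in>p. content K * G x) - (F b - F a)\<bar> < \<eta> + \<epsilon> * (b - a)"
proof -
  define T where "T = {t\<in>p. fst t \<in> N}"
  define \<delta> where "\<delta> = (\<lambda>(x, K). content K * G x - (F (Sup K) - F (Inf K)))"
  have "finite p"
    using p by blast
  have "(\<Sum>(x, K)\<in>p. content K * G x) - (F b - F a) = sum \<delta> T + sum \<delta> (p - T)"
    using additive_tagged_division_1[OF \<open>a \<le> b\<close> p, of F] sum.subset_diff[of T p \<delta>] \<open>finite p\<close>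
    unfolding \<delta>_def T_def by (simp add: sum_subtractf case_prod_beta)
  also have "\<bar>\<dots>\<bar> \<le> (\<Sum>t\<in>T. \<bar>\<delta> t\<bar>) + (\<Sum>t\<in>p - T. \<bar>\<delta> t\<bar>)"
    by (intro abs_triangle_ineq[THEN order_trans] add_mono sum_abs)
  also have "(\<Sum>t\<in>T. \<bar>\<delta> t\<bar>) < \<eta>"
    using assms(3) unfolding T_def \<delta>_def by (simp add: case_prod_beta)
  also have "(\<Sum>t\<in>p - T. \<bar>\<delta> t\<bar>) \<le> (\<Sum>(x, K)\<in>p - T. \<epsilon> * content K)"
    using assms(4) unfolding T_def \<delta>_def by (intro sum_mono) auto
  also have "\<dots> \<le> (\<Sum>(x, K)\<in>p. \<epsilon> * content K)"
    using \<open>finite p\<close> \<open>\<epsilon> \<ge> 0\<close> by (intro sum_mono2) auto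
  also have "\<dots> = \<epsilon> * (b - a)"
    using additive_content_tagged_division[of p a b] p \<open>a \<le> b\<close>
    by (simp add: cbox_interval sum_distrib_left[symmetric] case_prod_beta)
  finally show ?thesis
    by simp
qed

text \<open>Tags in the negligible set \<open>N\<close> carry intervals of small total length, so absolute continuity
  controls them; at all other tags the derivative exists.\<close>

theorem fundamental_theorem_of_calculus_abs_cont:
  fixes F F' :: "real \<Rightarrow> real"
  assumes "a \<le> b" and ac: "abs_cont_on F a b" and "negligible N"
    and deriv: "\<And>x. x \<in> {a..b} - N \<Longrightarrow> (F has_real_derivative F' x) (at x)"
  shows "(F' has_integral (F b - F a)) {a..b}"
proof -
  define g where "g x = (if x \<in> N then 0 else F' x)" for x
  have "(g has_integral (F b - F a)) (cbox a b)"
    unfolding has_integral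
  proof (intro allI impI)
    fix e :: real assume "e > 0"
    define \<epsilon> where "\<epsilon> = e / (2 * (b - a + 1))"
    have "e / 2 > 0" "\<epsilon> > 0" "\<epsilon> * (b - a) < e / 2"
      using \<open>e > 0\<close> \<open>a \<le> b\<close> unfolding \<epsilon>_def by (simp_all add: field_simps)
    obtain \<gamma>1 where "gauge \<gamma>1" and \<gamma>1: "\<And>p. p tagged_division_of {a..b} \<Longrightarrow> \<gamma>1 fine p \<Longrightarrow>
        (\<Sum>(x, K)\<in>{t\<in>p. fst t \<in> N}. \<bar>F (Sup K) - F (Inf K)\<bar>) < e / 2"
      using abs_cont_on_negligible_tags_gauge[OF ac \<open>negligible N\<close> \<open>e / 2 > 0\<close>] by blast
    obtain \<gamma>2 where "gauge \<gamma>2" and \<gamma>2: "\<And>p x K. p tagged_division_of {a..b} \<Longrightarrow> \<gamma>2 fine p \<Longrightarrow>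
        (x, K) \<in> p \<Longrightarrow> x \<in> {a..b} - N \<Longrightarrow>
        \<bar>content K * F' x - (F (Sup K) - F (Inf K))\<bar> \<le> \<epsilon> * content K"
      using has_real_derivative_tagged_division_gauge[OF deriv \<open>\<epsilon> > 0\<close>] by blast
    have "\<bar>(\<Sum>(x, K)\<in>p. content K * g x) - (F b - F a)\<bar> < e"
      if p: "p tagged_division_of {a..b}" and "\<gamma>1 fine p" "\<gamma>2 fine p" for p
    proof -
      have "(\<Sum>(x, K)\<in>{t\<in>p. fst t \<in> N}. \<bar>content K * g x - (F (Sup K) - F (Inf K))\<bar>) < e / 2"
        using \<gamma>1[OF p \<open>\<gamma>1 fine p\<close>] unfolding g_def by (simp add: case_prod_beta abs_minus_commute)
      moreover have "\<bar>content K * g x - (F (Sup K) - F (Inf K))\<bar> \<le> \<epsilon> * content K"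
        if "(x, K) \<in> p" "x \<notin> N" for x K
        using \<gamma>2[OF p \<open>\<gamma>2 fine p\<close> that(1)] tag_in_interval[OF p that(1)] that(2) unfolding g_def by simp
      ultimately have "\<bar>(\<Sum>(x, K)\<in>p. content K * g x) - (F b - F a)\<bar> < e / 2 + \<epsilon> * (b - a)"
        using \<open>\<epsilon> > 0\<close> by (intro tagged_division_Riemann_sum_increment_bound[OF \<open>a \<le> b\<close> p]) auto
      with \<open>\<epsilon> * (b - a) < e / 2\<close> show ?thesis
        by simp
    qed
    then show "\<exists>\<gamma>. gauge \<gamma> \<and> (\<forall>p. p tagged_division_of cbox a b \<and> \<gamma> fine p \<longrightarrow>
        norm ((\<Sum>(x, K)\<in>p. content K *\<^sub>R g x) - (F b - F a)) < e)"
      using \<open>gauge \<gamma>1\<close> \<open>gauge \<gamma>2\<close>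
      by (intro exI[of _ "\<lambda>x. \<gamma>1 x \<inter> \<gamma>2 x"]) (auto simp: fine_Int gauge_Int cbox_interval)
  qed
  then have "(g has_integral (F b - F a)) {a..b}"
    by (simp add: cbox_interval)
  then show ?thesis
    by (rule has_integral_spike[OF \<open>negligible N\<close>, rotated]) (auto simp: g_def)
qed

section \<open>The quadrature error\<close>

lemma has_integral_power_diff_const:
  fixes p q z :: real
  assumes "p \<le> q"
  shows "((\<lambda>t. (t - z) ^ k) has_integral ((q - z) ^ Suc k - (p - z) ^ Suc k) / Suc k) {p..q}"
proof -
  have "((\<lambda>t. (t - z) ^ Suc k / Suc k) has_real_derivative (x - z) ^ k) (at x within {p..q})" for x
    by (rule derivative_eq_intros refl | simp)+
  then have "((\<lambda>t. (t - z) ^ k) has_integral (q - z) ^ Suc k / Suc k - (p - z) ^ Suc k / Suc k) {p..q}"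
    using assms by (intro fundamental_theorem_of_calculus) (auto simp: has_real_derivative_iff_has_vector_derivative)
  then show ?thesis
    by (simp add: diff_divide_distrib)
qed

lemma abs_mult_le_AM_GM:
  fixes x y \<alpha> :: real
  assumes "\<alpha> > 0"
  shows "\<bar>x * y\<bar> \<le> (\<alpha> * x\<^sup>2 + y\<^sup>2 / \<alpha>) / 2"
proof -
  have "0 \<le> (\<alpha> * \<bar>x\<bar> - \<bar>y\<bar>)\<^sup>2 / \<alpha>"
    using assms by simp
  also have "\<dots> = \<alpha> * x\<^sup>2 + y\<^sup>2 / \<alpha> - 2 * \<bar>x * y\<bar>"
    using assms by (simp add: power2_eq_square field_simps abs_mult)
  finally show ?thesis
    by simp
qed

lemma has_integral_mult_abs_le_AM_GM:
  fixes k g :: "'a::euclidean_space \<Rightarrow> real"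
  assumes "((\<lambda>t. k t * g t) has_integral X) S"
    and "((\<lambda>t. (k t)\<^sup>2) has_integral A) S" and "((\<lambda>t. (g t)\<^sup>2) has_integral W) S"
    and "\<alpha> > 0"
  shows "\<bar>X\<bar> \<le> (\<alpha> * A + W / \<alpha>) / 2"
proof -
  have bound: "((\<lambda>t. (\<alpha> * (k t)\<^sup>2 + (g t)\<^sup>2 / \<alpha>) / 2) has_integral (\<alpha> * A + W / \<alpha>) / 2) S"
    using assms(2,3) by (intro has_integral_divide has_integral_add has_integral_mult_right) auto
  have "X \<le> (\<alpha> * A + W / \<alpha>) / 2"
    using abs_mult_le_AM_GM[OF assms(4)] by (intro has_integral_le[OF assms(1) bound]) (meson abs_le_D1)
  moreover have "- X \<le> (\<alpha> * A + W / \<alpha>) / 2"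
    using abs_mult_le_AM_GM[OF assms(4)]
    by (intro has_integral_le[OF has_integral_neg[OF assms(1)] bound]) (meson abs_le_D2)
  ultimately show ?thesis
    by linarith
qed

lemma le_sqrt_mult_if_AM_GM_bounded:
  fixes X A W :: real
  assumes "A > 0" and "W \<ge> 0" and bounded: "\<And>\<alpha>. \<alpha> > 0 \<Longrightarrow> X \<le> (\<alpha> * A + W / \<alpha>) / 2"
  shows "X \<le> sqrt (A * W)"
proof (cases "W = 0")
  case True
  show ?thesis
  proof (rule ccontr)
    assume "\<not> ?thesis"
    then have "X > 0"
      using True by simp
    then have "X \<le> X / 2"
      using bounded[of "X / A"] True \<open>A > 0\<close> by simp
    with \<open>X > 0\<close> show False
      by simp
  qed
next
  case False
  then have "sqrt W / sqrt A > 0"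
    using \<open>W \<ge> 0\<close> \<open>A > 0\<close> by simp
  moreover have "(sqrt W / sqrt A * A + W / (sqrt W / sqrt A)) / 2 = sqrt (A * W)"
    using \<open>W \<ge> 0\<close> \<open>A > 0\<close> False by (simp add: field_simps real_sqrt_mult)
  ultimately show ?thesis
    using bounded by metis
qed

lemma integral_combine_mono_partition:
  fixes x :: "nat \<Rightarrow> real" and \<phi> :: "real \<Rightarrow> 'a::banach"
  assumes "mono x" and "\<phi> integrable_on {x 0..x n}"
  shows "integral {x 0..x n} \<phi> = (\<Sum>i<n. integral {x i..x (Suc i)} \<phi>)"
  using assms(2)
proof (induction n)
  case (Suc n)
  have "x 0 \<le> x n" "x n \<le> x (Suc n)"
    using \<open>mono x\<close> by (simp_all add: monoD)
  then have "integral {x 0..x (Suc n)} \<phi> = integral {x 0..x n} \<phi> + integral {x n..x (Suc n)} \<phi>"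
    using Henstock_Kurzweil_Integration.integral_combine[OF _ _ Suc.prems] by simp
  moreover have "\<phi> integrable_on {x 0..x n}"
    using integrable_subinterval_real[OF Suc.prems] \<open>x n \<le> x (Suc n)\<close> by simp
  ultimately show ?case
    using Suc.IH by simp
qed simp

lemma has_integral_diff_const_mult_deriv:
  fixes f f' :: "real \<Rightarrow> real"
  assumes "p \<le> q" and ac: "abs_cont_on f p q" and "negligible N"
    and deriv: "\<And>x. x \<in> {p..q} - N \<Longrightarrow> (f has_real_derivative f' x) (at x)"
  shows "((\<lambda>t. (t - z) * f' t) has_integral ((q - z) * f q - (p - z) * f p - integral {p..q} f)) {p..q}"
proof -
  have "((\<lambda>t. (t - z) * f t) has_real_derivative f x + (x - z) * f' x) (at x)" if "x \<in> {p..q} - N" for x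
    using DERIV_mult'[OF DERIV_diff[OF DERIV_ident DERIV_const] deriv[OF that]] by (simp add: algebra_simps)
  then have parts: "((\<lambda>t. f t + (t - z) * f' t) has_integral ((q - z) * f q - (p - z) * f p)) {p..q}"
    by (rule fundamental_theorem_of_calculus_abs_cont[OF \<open>p \<le> q\<close>
        abs_cont_on_mult[OF abs_cont_on_diff_const ac] \<open>negligible N\<close>])
  have "(f has_integral integral {p..q} f) {p..q}"
    using integrable_continuous_real[OF abs_cont_on_imp_continuous_on[OF ac]] by blast
  from has_integral_diff[OF parts this] show ?thesis
    by simp
qed

lemma square_diff_const_integrable_on:
  fixes g :: "'a::euclidean_space \<Rightarrow> real"
  assumes "S \<in> lmeasurable" and "g integrable_on S" and "(\<lambda>t. (g t)\<^sup>2) integrable_on S"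
  shows "(\<lambda>t. (g t - c)\<^sup>2) integrable_on S"
proof -
  have "(\<lambda>t. (g t)\<^sup>2 - 2 * c * g t + c\<^sup>2) integrable_on S"
    using assms by (intro integrable_add integrable_diff integrable_on_mult_right integrable_on_const) auto
  moreover have "(\<lambda>t. (g t - c)\<^sup>2) = (\<lambda>t. (g t)\<^sup>2 - 2 * c * g t + c\<^sup>2)"
    by (simp add: fun_eq_iff power2_eq_square algebra_simps)
  ultimately show ?thesis
    by simp
qed

lemma linear_kernel_bound:
  fixes f f' :: "real \<Rightarrow> real"
  assumes "p \<le> q" and ac: "abs_cont_on f p q" and "negligible N"
    and deriv: "\<And>x. x \<in> {p..q} - N \<Longrightarrow> (f has_real_derivative f' x) (at x)"
    and "(\<lambda>t. (f' t)\<^sup>2) integrable_on {p..q}" and "\<alpha> > 0"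
  shows "\<bar>(q - z) * f q - (p - z) * f p - integral {p..q} f - c * ((q - z)\<^sup>2 - (p - z)\<^sup>2) / 2\<bar>
    \<le> (\<alpha> * (((q - z) ^ 3 - (p - z) ^ 3) / 3) + integral {p..q} (\<lambda>t. (f' t - c)\<^sup>2) / \<alpha>) / 2"
proof (rule has_integral_mult_abs_le_AM_GM[OF _ _ _ \<open>\<alpha> > 0\<close>])
  have "((\<lambda>t. t - z) has_integral ((q - z)\<^sup>2 - (p - z)\<^sup>2) / 2) {p..q}"
    using has_integral_power_diff_const[OF \<open>p \<le> q\<close>, of z 1] by (simp add: power2_eq_square)
  from has_integral_diff[OF has_integral_diff_const_mult_deriv[OF assms(1-4), where z=z] has_integral_mult_right[OF this, of c]]
  show "((\<lambda>t. (t - z) * (f' t - c)) has_integral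
      ((q - z) * f q - (p - z) * f p - integral {p..q} f - c * ((q - z)\<^sup>2 - (p - z)\<^sup>2) / 2)) {p..q}"
    by (simp add: algebra_simps)
  show "((\<lambda>t. (t - z)\<^sup>2) has_integral ((q - z) ^ 3 - (p - z) ^ 3) / 3) {p..q}"
    using has_integral_power_diff_const[OF \<open>p \<le> q\<close>, of z 2] by (simp add: numeral_3_eq_3)
  have "(f' has_integral (f q - f p)) {p..q}"
    by (rule fundamental_theorem_of_calculus_abs_cont[OF \<open>p \<le> q\<close> ac \<open>negligible N\<close> deriv])
  then show "((\<lambda>t. (f' t - c)\<^sup>2) has_integral integral {p..q} (\<lambda>t. (f' t - c)\<^sup>2)) {p..q}"
    using square_diff_const_integrable_on[of "{p..q}" f'] assms(5) by blast
qed

lemma integral_combine3: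
  fixes \<phi> :: "real \<Rightarrow> 'a::banach"
  assumes "p \<le> u" "u \<le> w" "w \<le> q" and "\<phi> integrable_on {p..q}"
  shows "integral {p..q} \<phi> = integral {p..u} \<phi> + integral {u..w} \<phi> + integral {w..q} \<phi>"
proof -
  have "\<phi> integrable_on {u..q}"
    using integrable_subinterval_real[OF assms(4)] assms(1) by simp
  then show ?thesis
    using Henstock_Kurzweil_Integration.integral_combine[OF _ _ assms(4), of u]
      Henstock_Kurzweil_Integration.integral_combine[of u w q \<phi>] assms(1-3)
    by (simp add: add.assoc)
qed

definition quarter_point_rule :: "(real \<Rightarrow> real) \<Rightarrow> real \<Rightarrow> real \<Rightarrow> real" where
  "quarter_point_rule f p q = (q - p) / 2 * (f ((3 * p + q) / 4) + f ((p + 3 * q) / 4))"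

lemma quarter_point_rule_error_bound:
  fixes f f' :: "real \<Rightarrow> real"
  assumes "p \<le> q" and ac: "abs_cont_on f p q" and "negligible N"
    and deriv: "\<And>x. x \<in> {p..q} - N \<Longrightarrow> (f has_real_derivative f' x) (at x)"
    and f2: "(\<lambda>t. (f' t)\<^sup>2) integrable_on {p..q}" and "\<alpha> > 0"
  shows "\<bar>integral {p..q} f - quarter_point_rule f p q\<bar>
    \<le> (\<alpha> * ((q - p) ^ 3 / 48) + integral {p..q} (\<lambda>t. (f' t - c)\<^sup>2) / \<alpha>) / 2"
proof -
  define h where "h = q - p"
  define q1 where "q1 = (3 * p + q) / 4"
  define q3 where "q3 = (p + 3 * q) / 4"
  define m where "m = (p + q) / 2"
  define W where "W u w = integral {u..w} (\<lambda>t. (f' t - c)\<^sup>2)" for u w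
  have order: "p \<le> q1" "q1 \<le> q3" "q3 \<le> q"
    using \<open>p \<le> q\<close> unfolding q1_def q3_def by auto
  have distances: "q1 - p = h / 4" "q3 - m = h / 4" "q1 - m = - (h / 4)" "q3 - q = - (h / 4)"
    unfolding h_def q1_def q3_def m_def by (simp_all add: field_simps)
  have piece: "\<bar>(w - z) * f w - (u - z) * f u - integral {u..w} f - c * ((w - z)\<^sup>2 - (u - z)\<^sup>2) / 2\<bar>
      \<le> (\<alpha> * (((w - z) ^ 3 - (u - z) ^ 3) / 3) + W u w / \<alpha>) / 2"
    if "p \<le> u" "u \<le> w" "w \<le> q" for u w z
    unfolding W_def
    by (rule linear_kernel_bound[OF \<open>u \<le> w\<close> abs_cont_on_subinterval[OF ac \<open>p \<le> u\<close> \<open>w \<le> q\<close>]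
          \<open>negligible N\<close> _ integrable_subinterval_real[OF f2] \<open>\<alpha> > 0\<close>])
      (use that deriv in auto)
  have B1: "\<bar>h / 4 * f q1 - integral {p..q1} f - c * h\<^sup>2 / 32\<bar> \<le> (\<alpha> * (h ^ 3 / 192) + W p q1 / \<alpha>) / 2"
    using piece[of p q1 p] order unfolding distances by (simp add: power2_eq_square power3_eq_cube)
  have B2: "\<bar>h / 4 * f q3 + h / 4 * f q1 - integral {q1..q3} f\<bar> \<le> (\<alpha> * (h ^ 3 / 96) + W q1 q3 / \<alpha>) / 2"
    using piece[of q1 q3 m] order unfolding distances by (simp add: power2_eq_square power3_eq_cube)
  have B3: "\<bar>h / 4 * f q3 - integral {q3..q} f + c * h\<^sup>2 / 32\<bar> \<le> (\<alpha> * (h ^ 3 / 192) + W q3 q / \<alpha>) / 2"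
    using piece[of q3 q q] order unfolding distances by (simp add: power2_eq_square power3_eq_cube)
  have "integral {p..q} f = integral {p..q1} f + integral {q1..q3} f + integral {q3..q} f"
    using integral_combine3[OF order integrable_continuous_real[OF abs_cont_on_imp_continuous_on[OF ac]]] .
  then have "integral {p..q} f - (q - p) / 2 * (f q1 + f q3)
      = - ((h / 4 * f q1 - integral {p..q1} f - c * h\<^sup>2 / 32) + (h / 4 * f q3 + h / 4 * f q1 - integral {q1..q3} f)
           + (h / 4 * f q3 - integral {q3..q} f + c * h\<^sup>2 / 32))"
    unfolding h_def by (simp add: field_simps)
  then have "\<bar>integral {p..q} f - (q - p) / 2 * (f q1 + f q3)\<bar>
      \<le> (\<alpha> * (h ^ 3 / 192) + W p q1 / \<alpha>) / 2 + (\<alpha> * (h ^ 3 / 96) + W q1 q3 / \<alpha>) / 2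
        + (\<alpha> * (h ^ 3 / 192) + W q3 q / \<alpha>) / 2"
    using B1 B2 B3 by linarith
  also have "\<dots> = (\<alpha> * (h ^ 3 / 48) + (W p q1 + W q1 q3 + W q3 q) / \<alpha>) / 2"
    using \<open>\<alpha> > 0\<close> by (simp add: field_simps)
  also have "W p q1 + W q1 q3 + W q3 q = W p q"
  proof -
    have "(f' has_integral (f q - f p)) {p..q}"
      by (rule fundamental_theorem_of_calculus_abs_cont[OF \<open>p \<le> q\<close> ac \<open>negligible N\<close> deriv])
    then show ?thesis
      unfolding W_def using square_diff_const_integrable_on[of "{p..q}" f'] f2
      by (intro integral_combine3[OF order, symmetric]) auto
  qed
  finally show ?thesis
    unfolding W_def h_def q1_def q3_def quarter_point_rule_def .
qed

lemma quad_S_eq_sum_quarter_point_rule: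
  "quad_S f a b n = (\<Sum>i<n. quarter_point_rule f (a + real i * ((b - a) / n)) (a + real (Suc i) * ((b - a) / n)))"
proof -
  have step: "a + real (Suc i) * h - (a + real i * h) = h" for h :: real and i
    by (simp add: algebra_simps)
  show ?thesis
    unfolding quad_S_def quarter_point_rule_def Let_def sum_distrib_left step ..
qed

lemma quad_S_error_AM_GM:
  fixes f f' :: "real \<Rightarrow> real"
  assumes "a < b" and "n \<ge> 1" and ac: "abs_cont_on f a b" and "negligible N"
    and deriv: "\<And>x. x \<in> {a..b} - N \<Longrightarrow> (f has_real_derivative f' x) (at x)"
    and f2: "(\<lambda>t. (f' t)\<^sup>2) integrable_on {a..b}" and "\<alpha> > 0"
  shows "\<bar>integral {a..b} f - quad_S f a b n\<bar>
    \<le> (\<alpha> * ((b - a) ^ 3 / (48 * (real n)\<^sup>2)) + integral {a..b} (\<lambda>t. (f' t - c)\<^sup>2) / \<alpha>) / 2"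
proof -
  define h where "h = (b - a) / n"
  define x where "x i = a + real i * h" for i
  define W where "W u w = integral {u..w} (\<lambda>t. (f' t - c)\<^sup>2)" for u w
  have step: "x (Suc i) - x i = h" for i
    unfolding x_def by (simp add: algebra_simps)
  have "h > 0"
    using assms(1,2) unfolding h_def by simp
  then have "mono x"
    unfolding x_def by (intro monoI) simp
  have "x 0 = a" "x n = b"
    using assms(2) unfolding x_def h_def by simp_all
  have cell: "a \<le> x i" "x i \<le> x (Suc i)" "x (Suc i) \<le> b" if "i < n" for i
    using monoD[OF \<open>mono x\<close>, of 0 i] monoD[OF \<open>mono x\<close>, of i "Suc i"] monoD[OF \<open>mono x\<close>, of "Suc i" n] that
    unfolding \<open>x 0 = a\<close> \<open>x n = b\<close> by auto
  have "(f' has_integral (f b - f a)) {a..b}"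
    using fundamental_theorem_of_calculus_abs_cont[OF _ ac \<open>negligible N\<close> deriv] \<open>a < b\<close> by simp
  then have "(\<lambda>t. (f' t - c)\<^sup>2) integrable_on {a..b}"
    using square_diff_const_integrable_on[of "{a..b}" f'] f2 by blast
  then have W_sum: "W a b = (\<Sum>i<n. W (x i) (x (Suc i)))"
    using integral_combine_mono_partition[OF \<open>mono x\<close>, of "\<lambda>t. (f' t - c)\<^sup>2" n]
    unfolding W_def \<open>x 0 = a\<close> \<open>x n = b\<close> by simp
  have "integral {a..b} f = (\<Sum>i<n. integral {x i..x (Suc i)} f)"
    using integral_combine_mono_partition[OF \<open>mono x\<close>, of f n]
      integrable_continuous_real[OF abs_cont_on_imp_continuous_on[OF ac]]
    unfolding \<open>x 0 = a\<close> \<open>x n = b\<close> by simp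
  moreover have "quad_S f a b n = (\<Sum>i<n. quarter_point_rule f (x i) (x (Suc i)))"
    unfolding quad_S_eq_sum_quarter_point_rule x_def h_def ..
  ultimately have "\<bar>integral {a..b} f - quad_S f a b n\<bar>
      \<le> (\<Sum>i<n. \<bar>integral {x i..x (Suc i)} f - quarter_point_rule f (x i) (x (Suc i))\<bar>)"
    by (simp add: sum_subtractf[symmetric] sum_abs)
  also have "\<dots> \<le> (\<Sum>i<n. (\<alpha> * ((x (Suc i) - x i) ^ 3 / 48) + W (x i) (x (Suc i)) / \<alpha>) / 2)"
  proof (rule sum_mono)
    fix i assume "i \<in> {..<n}"
    then have "a \<le> x i" "x i \<le> x (Suc i)" "x (Suc i) \<le> b"
      using cell by auto
    then show "\<bar>integral {x i..x (Suc i)} f - quarter_point_rule f (x i) (x (Suc i))\<bar>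
        \<le> (\<alpha> * ((x (Suc i) - x i) ^ 3 / 48) + W (x i) (x (Suc i)) / \<alpha>) / 2"
      unfolding W_def
      by (intro quarter_point_rule_error_bound[OF _ abs_cont_on_subinterval[OF ac] \<open>negligible N\<close> _
            integrable_subinterval_real[OF f2] \<open>\<alpha> > 0\<close>]) (auto intro: deriv)
  qed
  also have "\<dots> = (real n * (\<alpha> * (h ^ 3 / 48)) + W a b / \<alpha>) / 2"
    unfolding step W_sum by (simp add: sum.distrib add_divide_distrib sum_divide_distrib[symmetric])
  also have "real n * (\<alpha> * (h ^ 3 / 48)) = \<alpha> * ((b - a) ^ 3 / (48 * (real n)\<^sup>2))"
    using assms(2) unfolding h_def by (simp add: power3_eq_cube power2_eq_square)
  finally show ?thesis
    unfolding W_def .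
qed

lemma integral_square_diff_mean:
  fixes g :: "real \<Rightarrow> real"
  assumes "a < b" and "(g has_integral D) {a..b}" and "(\<lambda>t. (g t)\<^sup>2) integrable_on {a..b}"
  shows "integral {a..b} (\<lambda>t. (g t - D / (b - a))\<^sup>2) = integral {a..b} (\<lambda>t. (g t)\<^sup>2) - D\<^sup>2 / (b - a)"
proof -
  define c where "c = D / (b - a)"
  have "((\<lambda>t. (g t)\<^sup>2 - 2 * c * g t + c\<^sup>2) has_integral
      integral {a..b} (\<lambda>t. (g t)\<^sup>2) - 2 * c * D + c\<^sup>2 * (b - a)) {a..b}"
    using assms(2,3) has_integral_const_real[of "c\<^sup>2" a b] \<open>a < b\<close>
    by (intro has_integral_add has_integral_diff has_integral_mult_right) (auto simp: mult.commute)
  moreover have "(\<lambda>t. (g t)\<^sup>2 - 2 * c * g t + c\<^sup>2) = (\<lambda>t. (g t - c)\<^sup>2)"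
    by (simp add: fun_eq_iff power2_eq_square algebra_simps)
  moreover have "2 * c * D = 2 * (D\<^sup>2 / (b - a))" "c\<^sup>2 * (b - a) = D\<^sup>2 / (b - a)"
    using \<open>a < b\<close> unfolding c_def by (simp_all add: power2_eq_square)
  ultimately show ?thesis
    unfolding c_def[symmetric] by (simp add: integral_unique)
qed

lemma sqrt_cube_div_48_square:
  fixes d :: real
  assumes "d \<ge> 0"
  shows "sqrt (d ^ 3 / (48 * (real n)\<^sup>2)) = d powr (3 / 2) / (4 * sqrt 3 * real n)"
proof (rule real_sqrt_unique)
  have "(d powr (3 / 2))\<^sup>2 = d powr (3 / 2 + 3 / 2)"
    unfolding power2_eq_square powr_add ..
  also have "\<dots> = d ^ 3"
    using assms by simp
  finally have "(d powr (3 / 2))\<^sup>2 = d ^ 3" .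
  then show "(d powr (3 / 2) / (4 * sqrt 3 * real n))\<^sup>2 = d ^ 3 / (48 * (real n)\<^sup>2)"
    by (simp add: power_divide power_mult_distrib)
qed simp

theorem theorem3p3:
  fixes f f' :: "real \<Rightarrow> real" and a b :: real and n :: nat
  assumes "a < b" and "n \<ge> 1"
    and "abs_cont_on f a b"
    and "\<exists>N. negligible N \<and> (\<forall>x\<in>{a..b} - N. (f has_real_derivative f' x) (at x))"
    and "(\<lambda>x. (f' x)\<^sup>2) integrable_on {a..b}"
  shows "\<bar>integral {a..b} f - quad_S f a b n\<bar>
         \<le> (b - a) powr (3/2) / (4 * sqrt 3 * real n)
           * sqrt (integral {a..b} (\<lambda>x. (f' x)\<^sup>2) - (f b - f a)\<^sup>2 / (b - a))"
proof -
  obtain N where "negligible N" and deriv: "\<And>x. x \<in> {a..b} - N \<Longrightarrow> (f has_real_derivative f' x) (at x)"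
    using assms(4) by blast
  define c where "c = (f b - f a) / (b - a)"
  define A where "A = (b - a) ^ 3 / (48 * (real n)\<^sup>2)"
  have "(f' has_integral (f b - f a)) {a..b}"
    using fundamental_theorem_of_calculus_abs_cont[OF _ assms(3) \<open>negligible N\<close> deriv] \<open>a < b\<close> by simp
  then have "(\<lambda>t. (f' t - c)\<^sup>2) integrable_on {a..b}"
    and \<sigma>: "integral {a..b} (\<lambda>t. (f' t - c)\<^sup>2) = integral {a..b} (\<lambda>x. (f' x)\<^sup>2) - (f b - f a)\<^sup>2 / (b - a)"
    using square_diff_const_integrable_on[of "{a..b}" f' c] integral_square_diff_mean[OF \<open>a < b\<close>] assms(5)
    unfolding c_def by blast+
  then have "integral {a..b} (\<lambda>t. (f' t - c)\<^sup>2) \<ge> 0"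
    by (intro integral_nonneg) auto
  moreover have "A > 0"
    using assms(1,2) unfolding A_def by simp
  ultimately have "\<bar>integral {a..b} f - quad_S f a b n\<bar> \<le> sqrt (A * integral {a..b} (\<lambda>t. (f' t - c)\<^sup>2))"
    using quad_S_error_AM_GM[OF assms(1-3) \<open>negligible N\<close> deriv assms(5)] unfolding A_def
    by (intro le_sqrt_mult_if_AM_GM_bounded) auto
  also have "\<dots> = sqrt A * sqrt (integral {a..b} (\<lambda>t. (f' t - c)\<^sup>2))"
    by (rule real_sqrt_mult)
  also have "sqrt A = (b - a) powr (3/2) / (4 * sqrt 3 * real n)"
    unfolding A_def using \<open>a < b\<close> by (intro sqrt_cube_div_48_square) simp
  finally show ?thesis
    unfolding \<sigma> .
qed

end
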